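(* Every whirlygig is well-bicovered.
   Context: All graphs are finite and simple; "subgraph" means induced subgraph. A graph is well-bicovered if every vertex-inclusion-maximal induced bipartite subgraph has the same order. A maximal outerplanar graph (MOP) is an outerplanar graph to which no edge can be added while preserving outerplanarity. A whirlygig is constructed as follows: take a MOP $M$ with $m\ge 3$ vertices whose outer cycle is $u_1u_2\cdots u_mu_1$ (indices mod $m$); for each $i$ add a new vertex $t_i$ adjacent only to $u_i$ and $u_{i+1}$, and another new vertex $s_i$ adjacent only to $t_i$ and $u_i$. The case $m=2$ is also allowed, treating the MOP $K_2$ on $u_1,u_2$ as a cycle with two edges $u_1u_2$ and $u_2u_1$ and performing the same construction (yielding $P_6^2$). *)

theory Defs
  imports Main
begin

(* Finite simple graphs are given by a vertex set V and a symmetric,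
   irreflexive adjacency relation adj (only its restriction to V matters). *)

definition simple_graph :: "'a set \<Rightarrow> ('a \<Rightarrow> 'a \<Rightarrow> bool) \<Rightarrow> bool" where
  "simple_graph V adj \<longleftrightarrow> finite V \<and> (\<forall>x y. adj x y \<longrightarrow> adj y x) \<and> (\<forall>x. \<not> adj x x)"

definition induces_bipartite :: "('a \<Rightarrow> 'a \<Rightarrow> bool) \<Rightarrow> 'a set \<Rightarrow> bool" where
  "induces_bipartite adj X \<longleftrightarrow>
     (\<exists>A B. A \<union> B = X \<and> A \<inter> B = {} \<and>
            (\<forall>x\<in>A. \<forall>y\<in>A. \<not> adj x y) \<and> (\<forall>x\<in>B. \<forall>y\<in>B. \<not> adj x y))"

definition maximal_bipartite :: "'a set \<Rightarrow> ('a \<Rightarrow> 'a \<Rightarrow> bool) \<Rightarrow> 'a set \<Rightarrow> bool" where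
  "maximal_bipartite V adj X \<longleftrightarrow>
     X \<subseteq> V \<and> induces_bipartite adj X \<and>
     (\<forall>Y. X \<subset> Y \<and> Y \<subseteq> V \<longrightarrow> \<not> induces_bipartite adj Y)"

definition well_bicovered :: "'a set \<Rightarrow> ('a \<Rightarrow> 'a \<Rightarrow> bool) \<Rightarrow> bool" where
  "well_bicovered V adj \<longleftrightarrow>
     (\<forall>X Y. maximal_bipartite V adj X \<and> maximal_bipartite V adj Y \<longrightarrow> card X = card Y)"

(* Maximal outerplanar graphs on vertices 0..m-1 with outer cycle 0,1,...,m-1,0.
   Two chords ab, cd (four distinct endpoints) cross iff exactly one of c, d
   lies strictly between a and b in the cyclic order. *)
definition strictly_between :: "nat \<Rightarrow> nat \<Rightarrow> nat \<Rightarrow> bool" where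
  "strictly_between a x b \<longleftrightarrow> min a b < x \<and> x < max a b"

definition crosses :: "nat \<Rightarrow> nat \<Rightarrow> nat \<Rightarrow> nat \<Rightarrow> bool" where
  "crosses a b c d \<longleftrightarrow> distinct [a, b, c, d] \<and>
     (strictly_between a c b \<noteq> strictly_between a d b)"

(* E is a MOP on {0..<m} (m >= 2) whose outer (Hamiltonian) cycle is 0,1,...,m-1:
   it contains the cycle edges, its edges are pairwise non-crossing when drawn as
   chords of a disk (outerplanar embedding with the cycle as outer face), and it is
   edge-maximal with this property.  For m = 2 this is K_2. *)
definition mop_outer :: "nat \<Rightarrow> (nat \<Rightarrow> nat \<Rightarrow> bool) \<Rightarrow> bool" where
  "mop_outer m E \<longleftrightarrow> m \<ge> 2 \<and>
     (\<forall>i j. E i j \<longrightarrow> i < m \<and> j < m \<and> i \<noteq> j) \<and>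
     (\<forall>i j. E i j \<longrightarrow> E j i) \<and>
     (\<forall>i<m. E i (Suc i mod m)) \<and>
     (\<forall>a b c d. E a b \<and> E c d \<longrightarrow> \<not> crosses a b c d) \<and>
     (\<forall>a<m. \<forall>b<m. a \<noteq> b \<and> \<not> E a b \<longrightarrow> (\<exists>c d. E c d \<and> crosses a b c d))"

(* directed edge list of the whirlygig built from MOP E with labelled vertices
   u i, t i, s i (i < m); indices mod m *)
definition whirly_edge ::
  "nat \<Rightarrow> (nat \<Rightarrow> nat \<Rightarrow> bool) \<Rightarrow> (nat \<Rightarrow> 'a) \<Rightarrow> (nat \<Rightarrow> 'a) \<Rightarrow> (nat \<Rightarrow> 'a) \<Rightarrow> 'a \<Rightarrow> 'a \<Rightarrow> bool" where
  "whirly_edge m E u t s x y \<longleftrightarrow>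
     (\<exists>i<m. \<exists>j<m. E i j \<and> x = u i \<and> y = u j) \<or>
     (\<exists>i<m. (x = t i \<and> y = u i) \<or> (x = t i \<and> y = u (Suc i mod m)) \<or>
            (x = s i \<and> y = t i) \<or> (x = s i \<and> y = u i))"

definition is_whirlygig :: "'a set \<Rightarrow> ('a \<Rightarrow> 'a \<Rightarrow> bool) \<Rightarrow> bool" where
  "is_whirlygig V adj \<longleftrightarrow>
     (\<exists>m E u t s. mop_outer m E \<and>
        inj_on u {..<m} \<and> inj_on t {..<m} \<and> inj_on s {..<m} \<and>
        u ` {..<m} \<inter> t ` {..<m} = {} \<and> u ` {..<m} \<inter> s ` {..<m} = {} \<and>
        t ` {..<m} \<inter> s ` {..<m} = {} \<and>
        V = u ` {..<m} \<union> t ` {..<m} \<union> s ` {..<m} \<and>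
        (\<forall>x y. adj x y \<longleftrightarrow> whirly_edge m E u t s x y \<or> whirly_edge m E u t s y x))"

end

theory Submission
  imports Defs "HOL-Library.Disjoint_Sets"
begin

(* The vertices of a whirlygig split into the triangles {s i, t i, u i}, in which s i is adjacent
   only to t i and u i, and t i has just one neighbour, u (i + 1), outside its triangle.
   A bipartite set contains at most two vertices of a triangle, and a maximal one contains at
   least two: a maximal set missing s i must contain t i and u i (else s i could be added), and
   one containing s i but neither t i nor u i could be enlarged by t i.  So every maximal induced
   bipartite subgraph has exactly 2m vertices. *)

lemma induces_bipartite_subset:
  assumes "induces_bipartite adj X" "Y \<subseteq> X"
  shows "induces_bipartite adj Y"
proof -
  obtain A B where "A \<union> B = X" "A \<inter> B = {}"
    "\<forall>x\<in>A. \<forall>y\<in>A. \<not> adj x y" "\<forall>x\<in>B. \<forall>y\<in>B. \<not> adj x y"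
    using assms(1) unfolding induces_bipartite_def by blast
  then show ?thesis
    unfolding induces_bipartite_def
    by (intro exI[of _ "A \<inter> Y"] exI[of _ "B \<inter> Y"]) (use assms(2) in auto)
qed

lemma induces_bipartite_insert:
  assumes "induces_bipartite adj X" "v \<notin> X" "\<not> adj v v"
    and nbrs: "\<And>y. y \<in> X \<Longrightarrow> adj v y \<or> adj y v \<Longrightarrow> y = w"
  shows "induces_bipartite adj (insert v X)"
proof -
  obtain A B where AB: "A \<union> B = X" "A \<inter> B = {}"
    and indep: "\<forall>x\<in>A. \<forall>y\<in>A. \<not> adj x y" "\<forall>x\<in>B. \<forall>y\<in>B. \<not> adj x y"
    and "w \<notin> B"
  proof -
    obtain A B where "A \<union> B = X" "A \<inter> B = {}"
      "\<forall>x\<in>A. \<forall>y\<in>A. \<not> adj x y" "\<forall>x\<in>B. \<forall>y\<in>B. \<not> adj x y"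
      using assms(1) unfolding induces_bipartite_def by blast
    then show thesis
      using that[of A B] that[of B A] by blast
  qed
  have "\<forall>y\<in>B. \<not> adj v y \<and> \<not> adj y v"
    using nbrs AB(1) \<open>w \<notin> B\<close> by blast
  then have "\<forall>x\<in>insert v B. \<forall>y\<in>insert v B. \<not> adj x y"
    using indep(2) assms(3) by blast
  moreover have "A \<union> insert v B = insert v X" "A \<inter> insert v B = {}"
    using AB assms(2) by auto
  ultimately show ?thesis
    unfolding induces_bipartite_def using indep(1) by blast
qed

lemma induces_bipartite_no_triangle:
  assumes "induces_bipartite adj X" "adj a b" "adj b c" "adj a c"
  shows "\<not> {a, b, c} \<subseteq> X"
proof
  assume abc: "{a, b, c} \<subseteq> X"
  obtain A B where "A \<union> B = X"
    "\<forall>x\<in>A. \<forall>y\<in>A. \<not> adj x y" "\<forall>x\<in>B. \<forall>y\<in>B. \<not> adj x y"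
    using assms(1) unfolding induces_bipartite_def by blast
  with abc assms(2-4) show False by blast
qed

lemma maximal_bipartite_insert_mem:
  assumes "maximal_bipartite V adj X" "v \<in> V" "induces_bipartite adj (insert v X)"
  shows "v \<in> X"
  using assms unfolding maximal_bipartite_def by blast

definition pendant_triangle :: "('a \<Rightarrow> 'a \<Rightarrow> bool) \<Rightarrow> 'a \<Rightarrow> 'a \<Rightarrow> 'a \<Rightarrow> bool" where
  "pendant_triangle adj s t u \<longleftrightarrow>
     adj s t \<and> adj s u \<and> adj t u \<and>
     (\<forall>y. adj s y \<longrightarrow> y = t \<or> y = u) \<and>
     (\<exists>w. \<forall>y. adj t y \<longrightarrow> y = s \<or> y = u \<or> y = w)"

lemma card_maximal_bipartite_inter_pendant_triangle:
  assumes sym: "\<And>x y. adj x y \<Longrightarrow> adj y x" and irrefl: "\<And>x. \<not> adj x x"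
    and X: "maximal_bipartite V adj X"
    and T: "pendant_triangle adj s t u" "{s, t, u} \<subseteq> V"
  shows "card (X \<inter> {s, t, u}) = 2"
proof -
  obtain w where edges: "adj s t" "adj t u" "adj s u"
    and "\<And>y. adj s y \<Longrightarrow> y = t \<or> y = u"
    and "\<And>y. adj t y \<Longrightarrow> y = s \<or> y = u \<or> y = w"
    using T(1) unfolding pendant_triangle_def by blast
  then have nbrs_s: "\<And>y. adj s y \<or> adj y s \<Longrightarrow> y = t \<or> y = u"
    and nbrs_t: "\<And>y. adj t y \<or> adj y t \<Longrightarrow> y = s \<or> y = u \<or> y = w"
    using sym by metis+
  have bip: "induces_bipartite adj X"
    using X unfolding maximal_bipartite_def by blast
  have distinct: "s \<noteq> t" "s \<noteq> u" "t \<noteq> u"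
    using edges irrefl by metis+
  have "card (X \<inter> {s, t, u}) < card {s, t, u}"
    by (rule psubset_card_mono) (use induces_bipartite_no_triangle[OF bip edges] in auto)
  then have le: "card (X \<inter> {s, t, u}) \<le> 2"
    using distinct by simp
  obtain a b where "a \<noteq> b" "{a, b} \<subseteq> X \<inter> {s, t, u}"
  proof (cases "s \<in> X")
    case True
    have "t \<in> X \<or> u \<in> X"
    proof (rule ccontr)
      assume "\<not> (t \<in> X \<or> u \<in> X)"
      then have "t \<notin> X" "u \<notin> X" by auto
      have "induces_bipartite adj (X - {s})"
        using bip by (rule induces_bipartite_subset) blast
      then have "induces_bipartite adj (insert t (X - {s}))"
      proof (rule induces_bipartite_insert[where w = w])
        fix y assume "y \<in> X - {s}" "adj t y \<or> adj y t"
        with nbrs_t \<open>u \<notin> X\<close> show "y = w" by blast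
      qed (use \<open>t \<notin> X\<close> irrefl in auto)
      then have "induces_bipartite adj (insert s (insert t (X - {s})))"
      proof (rule induces_bipartite_insert[where w = t])
        fix y assume "y \<in> insert t (X - {s})" "adj s y \<or> adj y s"
        with nbrs_s \<open>u \<notin> X\<close> distinct show "y = t" by blast
      qed (use distinct irrefl in auto)
      moreover have "insert s (insert t (X - {s})) = insert t X"
        using True by auto
      ultimately have "t \<in> X"
        using maximal_bipartite_insert_mem[OF X] T(2) by simp
      with \<open>t \<notin> X\<close> show False ..
    qed
    then show thesis
      using that[of s t] that[of s u] True distinct by auto
  next
    case False
    have "t \<in> X \<and> u \<in> X"
    proof (rule ccontr)
      assume not_both: "\<not> (t \<in> X \<and> u \<in> X)"
      have "induces_bipartite adj (insert s X)"
      proof (rule induces_bipartite_insert[OF bip False, where w = "if t \<in> X then t else u"])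
        fix y assume "y \<in> X" "adj s y \<or> adj y s"
        with nbrs_s not_both show "y = (if t \<in> X then t else u)" by auto
      qed (rule irrefl)
      then have "s \<in> X"
        using maximal_bipartite_insert_mem[OF X] T(2) by simp
      with False show False ..
    qed
    then show thesis
      using that[of t u] distinct by auto
  qed
  then have "card {a, b} \<le> card (X \<inter> {s, t, u})"
    by (intro card_mono) auto
  with \<open>a \<noteq> b\<close> le show ?thesis by simp
qed

lemma card_maximal_bipartite_pendant_triangle_partition:
  fixes s t u :: "'i \<Rightarrow> 'a"
  assumes sym: "\<And>x y. adj x y \<Longrightarrow> adj y x" and irrefl: "\<And>x. \<not> adj x x"
    and "finite I"
    and V: "V = (\<Union>i\<in>I. {s i, t i, u i})"
    and disj: "disjoint_family_on (\<lambda>i. {s i, t i, u i}) I"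
    and pendant: "\<And>i. i \<in> I \<Longrightarrow> pendant_triangle adj (s i) (t i) (u i)"
    and X: "maximal_bipartite V adj X"
  shows "card X = 2 * card I"
proof -
  have "X \<subseteq> V"
    using X unfolding maximal_bipartite_def by blast
  then have "X = (\<Union>i\<in>I. X \<inter> {s i, t i, u i})"
    unfolding V by blast
  also have "card \<dots> = (\<Sum>i\<in>I. card (X \<inter> {s i, t i, u i}))"
    by (rule card_UN_disjoint'[OF disjoint_family_on_bisimulation[OF disj] _ \<open>finite I\<close>]) auto
  also have "\<dots> = (\<Sum>i\<in>I. 2)"
    using card_maximal_bipartite_inter_pendant_triangle[OF sym irrefl X pendant] V
    by (intro sum.cong) auto
  finally show ?thesis by simp
qed

corollary well_bicovered_if_pendant_triangle_partition:
  fixes s t u :: "'i \<Rightarrow> 'a"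
  assumes "\<And>x y. adj x y \<Longrightarrow> adj y x" "\<And>x. \<not> adj x x"
    and "finite I"
    and "V = (\<Union>i\<in>I. {s i, t i, u i})"
    and "disjoint_family_on (\<lambda>i. {s i, t i, u i}) I"
    and "\<And>i. i \<in> I \<Longrightarrow> pendant_triangle adj (s i) (t i) (u i)"
  shows "well_bicovered V adj"
  unfolding well_bicovered_def
  using card_maximal_bipartite_pendant_triangle_partition[OF assms] by simp

locale whirlygig =
  fixes m :: nat and E :: "nat \<Rightarrow> nat \<Rightarrow> bool" and u t s :: "nat \<Rightarrow> 'a"
    and V :: "'a set" and adj :: "'a \<Rightarrow> 'a \<Rightarrow> bool"
  assumes mop: "mop_outer m E"
    and inj_u: "inj_on u {..<m}" and inj_t: "inj_on t {..<m}" and inj_s: "inj_on s {..<m}"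
    and disjoint_ut: "u ` {..<m} \<inter> t ` {..<m} = {}"
    and disjoint_us: "u ` {..<m} \<inter> s ` {..<m} = {}"
    and disjoint_ts: "t ` {..<m} \<inter> s ` {..<m} = {}"
    and V_eq: "V = u ` {..<m} \<union> t ` {..<m} \<union> s ` {..<m}"
    and adj_iff: "\<And>x y. adj x y \<longleftrightarrow> whirly_edge m E u t s x y \<or> whirly_edge m E u t s y x"
begin

lemma two_le_m: "2 \<le> m"
  using mop unfolding mop_outer_def by (rule conjunct1)

lemma E_bounds:
  assumes "E i j"
  shows "i < m \<and> j < m \<and> i \<noteq> j"
proof -
  have "\<forall>i j. E i j \<longrightarrow> i < m \<and> j < m \<and> i \<noteq> j"
    using mop unfolding mop_outer_def by (elim conjE)
  with assms show ?thesis by blast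
qed

lemma Suc_mod_less [simp]: "i < m \<Longrightarrow> Suc i mod m < m"
  using two_le_m by simp

lemma vertices_distinct [simp]:
  assumes "i < m" "j < m"
  shows "u i \<noteq> t j" "t j \<noteq> u i" "u i \<noteq> s j" "s j \<noteq> u i" "t i \<noteq> s j" "s j \<noteq> t i"
  using assms disjoint_ut disjoint_us disjoint_ts by (auto simp: disjoint_iff)

lemma vertices_eq_iff [simp]:
  assumes "i < m" "j < m"
  shows "u i = u j \<longleftrightarrow> i = j" "t i = t j \<longleftrightarrow> i = j" "s i = s j \<longleftrightarrow> i = j"
  using assms inj_u inj_t inj_s by (auto dest: inj_onD)

lemma adj_sym: "adj x y \<Longrightarrow> adj y x"
  using adj_iff by blast

lemma adj_irrefl: "\<not> adj x x"
  unfolding adj_iff whirly_edge_def by (auto dest: E_bounds)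

lemma adj_s_iff: "i < m \<Longrightarrow> adj (s i) y \<longleftrightarrow> y = t i \<or> y = u i"
  unfolding adj_iff whirly_edge_def by (auto dest: E_bounds)

lemma adj_t_iff: "i < m \<Longrightarrow> adj (t i) y \<longleftrightarrow> y = u i \<or> y = u (Suc i mod m) \<or> y = s i"
  unfolding adj_iff whirly_edge_def by (auto dest: E_bounds)

lemma pendant_triangle: "i < m \<Longrightarrow> pendant_triangle adj (s i) (t i) (u i)"
  unfolding pendant_triangle_def by (auto simp: adj_s_iff adj_t_iff)

lemma V_eq_triangles: "V = (\<Union>i<m. {s i, t i, u i})"
  unfolding V_eq by auto

lemma triangles_disjoint: "disjoint_family_on (\<lambda>i. {s i, t i, u i}) {..<m}"
  unfolding disjoint_family_on_def by auto

lemma well_bicovered: "well_bicovered V adj"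
proof (rule well_bicovered_if_pendant_triangle_partition
    [OF adj_sym adj_irrefl finite_lessThan V_eq_triangles triangles_disjoint])
  fix i assume "i \<in> {..<m}"
  then show "pendant_triangle adj (s i) (t i) (u i)"
    by (simp add: pendant_triangle)
qed

end

theorem mainTheorem18:
  fixes V :: "'a set" and adj :: "'a \<Rightarrow> 'a \<Rightarrow> bool"
  assumes "is_whirlygig V adj"
  shows "well_bicovered V adj"
proof -
  from assms obtain m E u t s where "whirlygig m E u t s V adj"
    unfolding is_whirlygig_def whirlygig_def by blast
  then show ?thesis
    by (rule whirlygig.well_bicovered)
qed

end
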